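(* Let $d\ge1$, $\Omega_s<0$, $\mathbf{\Omega}_a\in\mathbb{R}^{d\times d}$ skew-symmetric, $\mathbf{\Omega}=\Omega_s\mathbf{I}+\mathbf{\Omega}_a$, $D>0$, $\Sigma_0>0$, $\mathbf{m}_0\in\mathbb{R}^d$, $T>0$, $\epsilon\ge0$, and let $\hat{\mathbf{D}}\in\mathbb{R}^{d\times d}$ be symmetric. Let $\mathbf{m}_t=e^{\mathbf{\Omega}t}\mathbf{m}_0$ and $\sigma_t^2=\Sigma_0e^{2\Omega_st}+D(e^{2\Omega_st}-1)/\Omega_s$. Set $\mathbf{P}=\int_0^T\mathbf{m}_t\mathbf{m}_t^Tdt$ with eigendecomposition $\mathbf{P}=\sum_{i=1}^d\gamma_i\mathbf{u}_i\mathbf{u}_i^T$ ($\{\mathbf{u}_i\}$ orthonormal, $\gamma_1\ge\dots\ge\gamma_d\ge0$), let $l=\mathrm{rank}(\mathbf{P})$, let $\mathbf{Q}$ be the orthogonal projector onto $\mathrm{range}(\mathbf{P})$, let $\mu_{ij}=\mathbf{u}_i^T(\hat{\mathbf{D}}-D\mathbf{I})\mathbf{u}_j$, and $$q=\int_0^T\frac{\sigma_t^4}{\sqrt{\epsilon^2/16+\sigma_t^4}}dt,\qquad r=\int_0^T\frac{\sigma_t^2}{\sqrt{\epsilon^2/16+\sigma_t^4}}dt.$$ Consider, for $\hat{\mathbf{\Omega}}\in\mathbb{R}^{d\times d}$, the unregularized function $$\mathcal{L}_\epsilon(\hat{\mathbf{\Omega}})=\mathrm{tr}\Big((\hat{\mathbf{\Omega}}-\mathbf{\Omega})^T(\hat{\mathbf{\Omega}}-\mathbf{\Omega})\mathbf{P}+\tfrac{q}{4}(\hat{\mathbf{\Omega}}+\hat{\mathbf{\Omega}}^T-2\Omega_s\mathbf{I})^2+r(\hat{\mathbf{\Omega}}+\hat{\mathbf{\Omega}}^T-2\Omega_s\mathbf{I})(\hat{\mathbf{D}}-D\mathbf{I})\Big).$$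 Then the minimizers of $\mathcal{L}_\epsilon$ over $\mathbb{R}^{d\times d}$ are exactly the matrices $$\hat{\mathbf{\Omega}}=\mathbf{\Omega}-rq^{-1}(\mathbf{I}-\mathbf{Q})(\hat{\mathbf{D}}-D\mathbf{I})(\mathbf{I}-\mathbf{Q})-2\sum_{i=1}^{l}\sum_{j=1}^{d}\frac{\gamma_i\,rq^{-1}\mu_{ij}}{2q^{-1}\gamma_i\gamma_j+\gamma_i+\gamma_j}\mathbf{u}_i\mathbf{u}_j^T+\mathbf{K},$$ where $\mathbf{K}$ ranges over skew-symmetric matrices with $\mathbf{K}\mathbf{P}=0$. The minimizer is unique if and only if $\mathrm{rank}(\mathbf{P})\ge d-1$.
   Context: This is the $\lambda=0$ (no regularization) continuous-time limit of the Sinkhorn-divergence (entropic regularization $\epsilon$) inference loss for a linear force $\hat{\mathbf{\Omega}}\mathbf{x}$ with assumed diffusion $\hat{\mathbf{D}}$ for the isotropic Ornstein–Uhlenbeck process $d\mathbf{x}=\mathbf{\Omega}\mathbf{x}dt+\sqrt{2D}d\mathbf{W}$, $\mathbf{x}_0\sim\mathcal{N}(\mathbf{m}_0,\Sigma_0\mathbf{I})$; the claim concerns the explicit function above. *)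

theory Defs
  imports "HOL-Analysis.Analysis"
begin

fun mat_pow :: "real^'n^'n \<Rightarrow> nat \<Rightarrow> real^'n^'n" where
  "mat_pow A 0 = mat 1"
| "mat_pow A (Suc k) = A ** mat_pow A k"

definition mat_exp :: "real^'n^'n \<Rightarrow> real^'n^'n" where
  "mat_exp A = (\<Sum>k. (1 / fact k) *\<^sub>R mat_pow A k)"

definition outer :: "real^'n \<Rightarrow> real^'n \<Rightarrow> real^'n^'n" where
  "outer u v = (\<chi> i j. u $ i * v $ j)"

definition is_orth_projector :: "real^'n^'n \<Rightarrow> (real^'n) set \<Rightarrow> bool" where
  "is_orth_projector Q S \<longleftrightarrow> (\<forall>x. Q *v x \<in> S \<and> (\<forall>y\<in>S. (x - Q *v x) \<bullet> y = 0))"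

definition sinkhorn_loss ::
  "real^'n^'n \<Rightarrow> real \<Rightarrow> real^'n^'n \<Rightarrow> real \<Rightarrow> real^'n^'n \<Rightarrow> real \<Rightarrow> real \<Rightarrow> real^'n^'n \<Rightarrow> real" where
  "sinkhorn_loss Om Oms Dh D P q r Oh =
     trace (transpose (Oh - Om) ** (Oh - Om) ** P
       + (q / 4) *\<^sub>R ((Oh + transpose Oh - (2 * Oms) *\<^sub>R mat 1) ** (Oh + transpose Oh - (2 * Oms) *\<^sub>R mat 1))
       + r *\<^sub>R ((Oh + transpose Oh - (2 * Oms) *\<^sub>R mat 1) ** (Dh - D *\<^sub>R mat 1)))"

end

theory Submission
  imports Defs
begin

(* Write Oh = Om + A and E = Dh - D I. Since Om + Om^T = 2 Oms I, the loss is the quadratic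
   function tr(A^T A P) + q/4 tr((A + A^T)^2) + r tr((A + A^T) E) of A. Its quadratic part
   tr(H^T H P) + q/4 tr((H + H^T)^2) is nonnegative, because P is positive semidefinite and
   q > 0 (as sigma_t^2 > 0), and it vanishes exactly for skew-symmetric H with H P = 0; so the
   minimizers are X + H for any critical point X. In the eigenbasis of P the critical-point
   equation X P + q/2 (X + X^T) + r E = 0 reads gam_j X_ij + q/2 (X_ij + X_ji) + r mu_ij = 0,
   a 2x2 system for each pair {i, j}, solved by the displayed matrix. A nonzero skew H with
   H P = 0 exists iff two eigenvalues vanish (take u_i u_j^T - u_j u_i^T for two kernel vectors);
   otherwise H kills all basis vectors but one, and skew-symmetry kills the last diagonal entry. *)

lemma transpose_add: "transpose (A + B) = transpose A + transpose (B :: 'a::plus^'n^'m)"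
  by (simp add: vec_eq_iff transpose_def)

lemma transpose_diff: "transpose (A - B) = transpose A - transpose (B :: 'a::minus^'n^'m)"
  by (simp add: vec_eq_iff transpose_def)

lemma transpose_zero: "transpose (0 :: 'a::zero^'n^'m) = 0"
  by (simp add: vec_eq_iff transpose_def)

lemma transpose_sum: "transpose (\<Sum>i\<in>I. f i) = (\<Sum>i\<in>I. transpose (f i :: 'a::comm_monoid_add^'n^'m))"
  by (induction I rule: infinite_finite_induct) (auto simp: transpose_add transpose_zero)

lemma matrix_add_rdistrib: "(A + B) ** C = A ** C + B ** (C :: 'a::semiring_1^'p^'n)"
  by (simp add: vec_eq_iff matrix_matrix_mult_def distrib_right sum.distrib)

lemma matrix_diff_rdistrib: "(A - B) ** C = A ** C - B ** (C :: 'a::ring_1^'p^'n)"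
  by (simp add: vec_eq_iff matrix_matrix_mult_def left_diff_distrib sum_subtractf)

lemma matrix_sum_ldistrib: "A ** (\<Sum>i\<in>I. f i) = (\<Sum>i\<in>I. A ** (f i :: 'a::semiring_1^'p^'n))"
  by (induction I rule: infinite_finite_induct) (auto simp: matrix_add_ldistrib)

lemma sum_matrix_vector_mult: "(\<Sum>i\<in>I. f i) *v x = (\<Sum>i\<in>I. f i *v (x :: 'a::semiring_1^'n))"
  by (induction I rule: infinite_finite_induct) (auto simp: matrix_vector_mult_add_rdistrib)

lemma matrix_vector_mult_sum: "A *v (\<Sum>i\<in>I. f i) = (\<Sum>i\<in>I. A *v (f i :: 'a::semiring_1^'n))"
  by (induction I rule: infinite_finite_induct) (auto simp: matrix_vector_right_distrib)

lemma uminus_matrix_vector_mult: "(- A) *v x = - (A *v (x :: 'a::ring_1^'n))"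
  by (simp add: vec_eq_iff matrix_vector_mult_def sum_negf)

lemma trace_scaleR: "trace (c *\<^sub>R A) = c * trace (A :: real^'n^'n)"
  by (simp add: trace_def sum_distrib_left)

lemma trace_sum: "trace (\<Sum>i\<in>I. f i) = (\<Sum>i\<in>I. trace (f i :: 'a::comm_semiring_1^'n^'n))"
  by (induction I rule: infinite_finite_induct) (auto simp: trace_add trace_0[simplified])

lemma trace_transpose: "trace (transpose A) = trace (A :: 'a::semiring_1^'n^'n)"
  by (simp add: trace_def transpose_def)

lemma trace_transpose_mult_self: "trace (transpose S ** S) = (\<Sum>i\<in>UNIV. \<Sum>k\<in>UNIV. (S $ k $ i)\<^sup>2)"
  for S :: "real^'n^'n"
  by (simp add: trace_def matrix_matrix_mult_def transpose_def power2_eq_square)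

lemma trace_transpose_mult_self_nonneg: "0 \<le> trace (transpose S ** (S :: real^'n^'n))"
  by (simp add: trace_transpose_mult_self sum_nonneg)

lemma trace_transpose_mult_self_eq_0_iff: "trace (transpose S ** S) = 0 \<longleftrightarrow> S = (0 :: real^'n^'n)"
proof
  assume "trace (transpose S ** S) = 0"
  then have "\<forall>i k. (S $ k $ i)\<^sup>2 = 0"
    by (simp add: trace_transpose_mult_self sum_nonneg sum_nonneg_eq_0_iff)
  then show "S = 0" by (simp add: vec_eq_iff)
qed (simp add: trace_def)

lemma trace_transpose_mult_sym:
  assumes "transpose P = P"
  shows "trace (transpose A ** B ** P) = trace (transpose B ** A ** (P :: 'a::comm_semiring_1^'n^'n))"
proof -
  have "trace (transpose A ** B ** P) = trace (transpose (transpose A ** B ** P))"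
    by (simp add: trace_transpose)
  also have "\<dots> = trace (P ** (transpose B ** A))"
    by (simp add: matrix_transpose_mul assms matrix_mul_assoc)
  also have "\<dots> = trace (transpose B ** A ** P)"
    by (rule trace_mul_sym)
  finally show ?thesis .
qed

lemma trace_symmetrize_mult:
  assumes "transpose S = S"
  shows "trace ((H + transpose H) ** S) = 2 * trace (transpose H ** (S :: 'a::comm_semiring_1^'n^'n))"
proof -
  have "trace (H ** S) = trace (transpose H ** S)"
    by (metis assms matrix_transpose_mul trace_mul_sym trace_transpose)
  then show ?thesis by (simp add: matrix_add_rdistrib trace_add mult_2)
qed

lemma matrix_scaleR_right: "A ** (c *\<^sub>R B) = c *\<^sub>R (A ** B :: real^'p^'n)"
  by (simp add: vec_eq_iff matrix_matrix_mult_def sum_distrib_left mult_ac)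

lemma outer_matrix_vector_mult: "outer u v *v x = (v \<bullet> x) *\<^sub>R u"
  by (simp add: vec_eq_iff outer_def matrix_vector_mult_def inner_vec_def sum_distrib_left
      sum_distrib_right mult_ac)

lemma matrix_mult_outer: "A ** outer u v = outer (A *v u) v"
  by (simp add: vec_eq_iff outer_def matrix_matrix_mult_def matrix_vector_mult_def
      sum_distrib_left sum_distrib_right mult_ac)

lemma outer_matrix_mult: "outer u v ** A = outer u (transpose A *v v)"
  by (simp add: vec_eq_iff outer_def matrix_matrix_mult_def matrix_vector_mult_def transpose_def
      sum_distrib_left mult_ac)

lemma trace_outer: "trace (outer u v) = u \<bullet> v"
  by (simp add: trace_def outer_def inner_vec_def)

lemma transpose_outer: "transpose (outer u v) = outer v u"
  by (simp add: vec_eq_iff outer_def transpose_def mult.commute)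

lemma outer_zero_right: "outer u 0 = 0"
  by (simp add: vec_eq_iff outer_def)

definition quadratic_loss :: "real^'n^'n \<Rightarrow> real^'n^'n \<Rightarrow> real \<Rightarrow> real \<Rightarrow> real^'n^'n \<Rightarrow> real" where
  "quadratic_loss P E q r A =
     trace (transpose A ** A ** P + (q / 4) *\<^sub>R ((A + transpose A) ** (A + transpose A))
       + r *\<^sub>R ((A + transpose A) ** E))"

definition loss_curvature :: "real^'n^'n \<Rightarrow> real \<Rightarrow> real^'n^'n \<Rightarrow> real" where
  "loss_curvature P q H =
     trace (transpose H ** H ** P) + q / 4 * trace ((H + transpose H) ** (H + transpose H))"

lemma sinkhorn_loss_eq_quadratic_loss:
  assumes "Om + transpose Om = (2 * Oms) *\<^sub>R mat 1"
  shows "sinkhorn_loss Om Oms Dh D P q r Oh = quadratic_loss P (Dh - D *\<^sub>R mat 1) q r (Oh - Om)"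
proof -
  have "Oh + transpose Oh - (2 * Oms) *\<^sub>R mat 1 = (Oh - Om) + transpose (Oh - Om)"
    unfolding assms[symmetric] by (simp add: transpose_diff algebra_simps)
  then show ?thesis
    unfolding sinkhorn_loss_def quadratic_loss_def by (simp only:)
qed

lemma quadratic_loss_add:
  assumes "transpose P = P" and "transpose E = E"
  shows "quadratic_loss P E q r (X + H) = quadratic_loss P E q r X + loss_curvature P q H
           + 2 * trace (transpose H ** (X ** P + (q / 2) *\<^sub>R (X + transpose X) + r *\<^sub>R E))"
proof -
  define SX SH where "SX = X + transpose X" and "SH = H + transpose H"
  have "transpose SX = SX"
    unfolding SX_def by (simp add: transpose_add add.commute)
  then have SH_SX: "trace (SH ** SX) = 2 * trace (transpose H ** SX)"
    and SX_SH: "trace (SX ** SH) = 2 * trace (transpose H ** SX)"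
    unfolding SH_def by (metis trace_symmetrize_mult trace_mul_sym)+
  have SH_E: "trace (SH ** E) = 2 * trace (transpose H ** E)"
    unfolding SH_def using assms(2) by (rule trace_symmetrize_mult)
  have X_H: "trace (transpose X ** H ** P) = trace (transpose H ** X ** P)"
    using assms(1) by (rule trace_transpose_mult_sym)
  have "X + H + transpose (X + H) = SX + SH"
    unfolding SX_def SH_def by (simp add: transpose_add)
  then have "quadratic_loss P E q r (X + H)
      = trace (transpose X ** X ** P) + trace (transpose X ** H ** P)
        + trace (transpose H ** X ** P) + trace (transpose H ** H ** P)
        + q / 4 * (trace (SX ** SX) + trace (SX ** SH) + trace (SH ** SX) + trace (SH ** SH))
        + r * (trace (SX ** E) + trace (SH ** E))"
    unfolding quadratic_loss_def
    by (simp add: transpose_add matrix_add_ldistrib matrix_add_rdistrib trace_add trace_scaleR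
        algebra_simps)
  also have "\<dots> = quadratic_loss P E q r X + loss_curvature P q H
           + 2 * trace (transpose H ** (X ** P + (q / 2) *\<^sub>R SX + r *\<^sub>R E))"
    unfolding X_H SX_SH SH_SX SH_E quadratic_loss_def loss_curvature_def
      SX_def[symmetric] SH_def[symmetric]
    by (simp add: matrix_add_ldistrib matrix_mul_assoc matrix_scaleR_right trace_add trace_scaleR
        algebra_simps)
  finally show ?thesis
    unfolding SX_def .
qed

lemma minimizers_of_translated_form:
  fixes f g :: "'a::ab_group_add \<Rightarrow> real"
  assumes f_eq: "\<And>Y. f Y = c + g (Y - Y0)" and g_nonneg: "\<And>H. 0 \<le> g H" and g_0: "g 0 = 0"
  shows "{Y. \<forall>Z. f Y \<le> f Z} = {Y0 + H | H. g H = 0}"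
    and "(\<exists>!Y. \<forall>Z. f Y \<le> f Z) \<longleftrightarrow> (\<forall>H. g H = 0 \<longrightarrow> H = 0)"
proof -
  have min_iff: "(\<forall>Z. f Y \<le> f Z) \<longleftrightarrow> g (Y - Y0) = 0" for Y
  proof
    assume "\<forall>Z. f Y \<le> f Z"
    then have "f Y \<le> f Y0" ..
    then have "g (Y - Y0) \<le> g 0"
      using f_eq by simp
    then show "g (Y - Y0) = 0"
      using g_nonneg[of "Y - Y0"] g_0 by linarith
  qed (simp add: f_eq g_nonneg)
  show "{Y. \<forall>Z. f Y \<le> f Z} = {Y0 + H | H. g H = 0}"
    unfolding min_iff by (auto simp: algebra_simps) (metis add.commute diff_add_cancel)
  show "(\<exists>!Y. \<forall>Z. f Y \<le> f Z) \<longleftrightarrow> (\<forall>H. g H = 0 \<longrightarrow> H = 0)"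
    unfolding min_iff by (metis add_diff_cancel_left' diff_self eq_iff_diff_eq_0 g_0)
qed

lemma finite_down_closed_eq_lessThan:
  fixes Z :: "nat set"
  assumes "finite Z" and "\<And>i j. i \<le> j \<Longrightarrow> j \<in> Z \<Longrightarrow> i \<in> Z"
  shows "Z = {..<card Z}"
proof (cases "Z = {}")
  case False
  then have "Z = {..Max Z}"
    using assms by (auto intro: Max_in)
  then show ?thesis
    by (metis card_atMost lessThan_Suc_atMost)
qed simp

locale orthonormal_frame =
  fixes u :: "nat \<Rightarrow> real^'n"
  assumes inner_frame:
    "\<And>i j. i < CARD('n) \<Longrightarrow> j < CARD('n) \<Longrightarrow> u i \<bullet> u j = (if i = j then 1 else 0)"
begin

lemma inner_frame_sum:
  assumes "a < CARD('n)"
  shows "u a \<bullet> (\<Sum>b<CARD('n). c b *\<^sub>R u b) = c a"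
proof -
  have "u a \<bullet> (\<Sum>b<CARD('n). c b *\<^sub>R u b) = (\<Sum>b<CARD('n). if b = a then c b else 0)"
    unfolding inner_sum_right by (rule sum.cong) (use assms inner_frame in auto)
  then show ?thesis
    using assms by simp
qed

lemma inj_on_frame: "inj_on u {..<CARD('n)}"
  by (rule inj_onI) (metis inner_frame lessThan_iff zero_neq_one)

lemma independent_frame: "independent (u ` {..<CARD('n)})"
proof (rule pairwise_orthogonal_independent)
  show "pairwise orthogonal (u ` {..<CARD('n)})"
    unfolding pairwise_def orthogonal_def using inner_frame by fastforce
  show "0 \<notin> u ` {..<CARD('n)}"
    using inner_frame by fastforce
qed

lemma span_frame: "span (u ` {..<CARD('n)}) = UNIV"
proof -
  have "UNIV \<subseteq> span (u ` {..<CARD('n)})"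
    by (rule card_ge_dim_independent)
      (use independent_frame inj_on_frame in \<open>auto simp: card_image\<close>)
  then show ?thesis by auto
qed

lemma frame_expansion: "x = (\<Sum>b<CARD('n). (u b \<bullet> x) *\<^sub>R u b)"
proof -
  define y where "y = x - (\<Sum>b<CARD('n). (u b \<bullet> x) *\<^sub>R u b)"
  have "u a \<bullet> y = 0" if "a < CARD('n)" for a
    using inner_frame_sum[OF that, of "\<lambda>b. u b \<bullet> x"] by (simp add: y_def inner_diff_right)
  then have "orthogonal y z" if "z \<in> u ` {..<CARD('n)}" for z
    using that by (auto simp: orthogonal_def inner_commute)
  then have "orthogonal y y"
    using orthogonal_to_span span_frame by blast
  then show ?thesis
    by (simp add: y_def orthogonal_def)
qed

lemma vector_eq_0_by_frame: "(\<And>a. a < CARD('n) \<Longrightarrow> u a \<bullet> x = 0) \<Longrightarrow> x = 0"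
  by (subst frame_expansion) simp

lemma matrix_eq_0_by_frame:
  assumes "\<And>a b. a < CARD('n) \<Longrightarrow> b < CARD('n) \<Longrightarrow> u a \<bullet> (M *v u b) = 0"
  shows "M = (0 :: real^'n^'n)"
proof -
  have "M *v u b = 0" if "b < CARD('n)" for b
    using assms that vector_eq_0_by_frame by blast
  then have "M *v x = 0 *v x" for x
    using frame_expansion[of x] matrix_vector_mult_sum[of M]
    by (metis (no_types, lifting) lessThan_iff matrix_vector_mult_0 matrix_vector_mult_scaleR
        scaleR_zero_right sum.neutral)
  then show ?thesis
    using matrix_eq by blast
qed

lemma frame_coord_sum_outer:
  assumes "a < CARD('n)" and "b < CARD('n)" and "m \<le> CARD('n)"
  shows "u a \<bullet> ((\<Sum>i<m. \<Sum>j<CARD('n). c i j *\<^sub>R outer (u i) (u j)) *v u b)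
           = (if a < m then c a b else 0)"
proof -
  have "(\<Sum>j<CARD('n). c i j *\<^sub>R outer (u i) (u j)) *v u b = c i b *\<^sub>R u i" for i
  proof -
    have "(\<Sum>j<CARD('n). c i j *\<^sub>R outer (u i) (u j)) *v u b
        = (\<Sum>j<CARD('n). if j = b then c i b *\<^sub>R u i else 0)"
      unfolding sum_matrix_vector_mult
      by (rule sum.cong)
        (use assms(2) inner_frame in \<open>auto simp: scaleR_matrix_vector_assoc[symmetric]
          outer_matrix_vector_mult\<close>)
    then show ?thesis
      using assms(2) by simp
  qed
  moreover have "{..<CARD('n)} \<inter> {i. i < m} = {..<m}"
    using assms(3) by auto
  ultimately have "(\<Sum>i<m. \<Sum>j<CARD('n). c i j *\<^sub>R outer (u i) (u j)) *v u b
      = (\<Sum>i<CARD('n). (if i < m then c i b else 0) *\<^sub>R u i)"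
    by (simp add: sum_matrix_vector_mult if_distrib[of "\<lambda>x. x *\<^sub>R _"] sum.If_cases)
  then show ?thesis
    using inner_frame_sum[OF assms(1)] by simp
qed

end

lemma critical_coeff_balance:
  fixes q g h r e :: real
  assumes "0 < q" and "0 < g" and "0 < h"
  shows "h * (- 2 * (g * (r / q) * e / (2 / q * g * h + g + h)))
     + q / 2 * (- 2 * (g * (r / q) * e / (2 / q * g * h + g + h))
                - 2 * (h * (r / q) * e / (2 / q * h * g + h + g)))
     + r * e = 0"
proof -
  define s where "s = 2 * g * h + q * g + q * h"
  define k where "k = r * e / s"
  have "0 < s"
    using assms by (simp add: s_def add_pos_pos)
  then have gh: "x * (r / q) * e / (2 / q * g * h + g + h) = x * k"
    and hg: "x * (r / q) * e / (2 / q * h * g + h + g) = x * k" for x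
    using assms by (simp_all add: k_def s_def field_simps)
  have "h * (- 2 * (g * k)) + q / 2 * (- 2 * (g * k) - 2 * (h * k)) + r * e = r * e - k * s"
    by (simp add: s_def algebra_simps)
  also have "\<dots> = 0"
    using \<open>0 < s\<close> by (simp add: k_def)
  finally show ?thesis
    unfolding gh hg .
qed

locale spectral_decomposition = orthonormal_frame u for u :: "nat \<Rightarrow> real^'n" +
  fixes gam :: "nat \<Rightarrow> real" and P :: "real^'n^'n"
  assumes gam_antimono: "\<And>i j. i \<le> j \<Longrightarrow> j < CARD('n) \<Longrightarrow> gam j \<le> gam i"
    and gam_nonneg: "\<And>i. i < CARD('n) \<Longrightarrow> 0 \<le> gam i"
    and P_eq: "P = (\<Sum>i<CARD('n). gam i *\<^sub>R outer (u i) (u i))"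
begin

lemma P_matrix_vector_mult: "P *v x = (\<Sum>i<CARD('n). (gam i * (u i \<bullet> x)) *\<^sub>R u i)"
  unfolding P_eq
  by (simp add: sum_matrix_vector_mult scaleR_matrix_vector_assoc[symmetric]
      outer_matrix_vector_mult inner_commute)

lemma inner_frame_P: "a < CARD('n) \<Longrightarrow> u a \<bullet> (P *v x) = gam a * (u a \<bullet> x)"
  unfolding P_matrix_vector_mult by (rule inner_frame_sum)

lemma P_frame: "b < CARD('n) \<Longrightarrow> P *v u b = gam b *\<^sub>R u b"
  by (rule vector_eq_0_by_frame[where x = "P *v u b - gam b *\<^sub>R u b", simplified])
    (simp add: inner_diff_right inner_frame_P inner_frame)

lemma transpose_P: "transpose P = P"
  unfolding P_eq by (simp add: transpose_sum transpose_scalar transpose_outer)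

lemma range_P: "range (\<lambda>x. P *v x) = span (u ` {i. i < CARD('n) \<and> gam i \<noteq> 0})"
proof
  have "(gam i * (u i \<bullet> x)) *\<^sub>R u i \<in> span (u ` {i. i < CARD('n) \<and> gam i \<noteq> 0})"
    if "i < CARD('n)" for i x
    using that by (cases "gam i = 0") (auto intro: span_mul span_base simp: span_zero)
  then show "range (\<lambda>x. P *v x) \<subseteq> span (u ` {i. i < CARD('n) \<and> gam i \<noteq> 0})"
    unfolding P_matrix_vector_mult by (auto intro: span_sum)
  have "u i \<in> range (\<lambda>x. P *v x)" if "i < CARD('n)" "gam i \<noteq> 0" for i
  proof -
    have "P *v ((1 / gam i) *\<^sub>R u i) = u i"
      using that by (simp add: matrix_vector_mult_scaleR P_frame)
    then show ?thesis by (metis rangeI)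
  qed
  then show "span (u ` {i. i < CARD('n) \<and> gam i \<noteq> 0}) \<subseteq> range (\<lambda>x. P *v x)"
    by (intro span_minimal linear_subspace_image[OF matrix_vector_mul_linear subspace_UNIV]) auto
qed

lemma rank_P: "rank P = card {i. i < CARD('n) \<and> gam i \<noteq> 0}"
proof -
  let ?Z = "{i. i < CARD('n) \<and> gam i \<noteq> 0}"
  have "independent (u ` ?Z)"
    by (rule independent_mono[OF independent_frame]) auto
  then have "rank P = card (u ` ?Z)"
    unfolding rank_dim_range range_P by (rule dim_span_eq_card_independent)
  also have "\<dots> = card ?Z"
    by (rule card_image) (rule inj_on_subset[OF inj_on_frame], auto)
  finally show ?thesis .
qed

lemma nonzero_eigenvalues: "{i. i < CARD('n) \<and> gam i \<noteq> 0} = {..<rank P}"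
  unfolding rank_P
proof (rule finite_down_closed_eq_lessThan)
  fix i j assume "i \<le> j" "j \<in> {i. i < CARD('n) \<and> gam i \<noteq> 0}"
  then show "i \<in> {i. i < CARD('n) \<and> gam i \<noteq> 0}"
    using gam_antimono[of i j] gam_nonneg[of j] by auto
qed simp

lemma gam_pos_iff: "i < CARD('n) \<Longrightarrow> 0 < gam i \<longleftrightarrow> i < rank P"
  using nonzero_eigenvalues gam_nonneg[of i] by (auto simp: set_eq_iff less_le)

lemma gam_eq_0: "i < CARD('n) \<Longrightarrow> \<not> i < rank P \<Longrightarrow> gam i = 0"
  using gam_pos_iff gam_nonneg by force

lemma frame_coord_complement_projector:
  assumes "is_orth_projector Q (range (\<lambda>x. P *v x))" and "a < CARD('n)"
  shows "u a \<bullet> ((mat 1 - Q) *v y) = (if a < rank P then 0 else u a \<bullet> y)"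
proof (cases "a < rank P")
  case True
  then have "gam a \<noteq> 0"
    using gam_pos_iff[OF assms(2)] by simp
  then have "P *v ((1 / gam a) *\<^sub>R u a) = u a"
    using assms(2) by (simp add: matrix_vector_mult_scaleR P_frame)
  then have "(y - Q *v y) \<bullet> u a = 0"
    using assms(1) unfolding is_orth_projector_def by (metis rangeI)
  then show ?thesis
    using True by (simp add: matrix_vector_mult_diff_rdistrib inner_commute)
next
  case False
  obtain z where "Q *v y = P *v z"
    using assms(1) unfolding is_orth_projector_def by blast
  then have "u a \<bullet> (Q *v y) = 0"
    using inner_frame_P[OF assms(2)] gam_eq_0[OF assms(2) False] by simp
  then show ?thesis
    using False by (simp add: matrix_vector_mult_diff_rdistrib inner_diff_right)
qed

lemma complement_projector_frame:
  assumes "is_orth_projector Q (range (\<lambda>x. P *v x))" and "b < CARD('n)"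
  shows "(mat 1 - Q) *v u b = (if b < rank P then 0 else u b)"
  by (rule vector_eq_0_by_frame[where x = "(mat 1 - Q) *v u b - (if b < rank P then 0 else u b)",
        simplified])
    (use frame_coord_complement_projector[OF assms(1)] inner_frame assms(2)
      in \<open>auto simp: inner_diff_right\<close>)

lemma matrix_mult_P: "H ** P = (\<Sum>i<CARD('n). gam i *\<^sub>R outer (H *v u i) (u i))"
  unfolding P_eq by (simp add: matrix_sum_ldistrib matrix_scaleR_right matrix_mult_outer)

lemma trace_transpose_mult_P:
  "trace (transpose H ** H ** P) = (\<Sum>i<CARD('n). gam i * ((H *v u i) \<bullet> (H *v u i)))"
  unfolding matrix_mult_P
  by (simp add: trace_sum trace_scaleR trace_outer dot_lmul_matrix matrix_vector_mul_assoc[symmetric])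

lemma trace_transpose_mult_P_nonneg: "0 \<le> trace (transpose H ** H ** P)"
  unfolding trace_transpose_mult_P by (auto intro!: sum_nonneg mult_nonneg_nonneg gam_nonneg)

lemma loss_curvature_nonneg:
  assumes "0 \<le> q"
  shows "0 \<le> loss_curvature P q H"
proof -
  have "0 \<le> trace (transpose H ** H ** P)"
    by (rule trace_transpose_mult_P_nonneg)
  moreover have "0 \<le> trace ((H + transpose H) ** (H + transpose H))"
    using trace_transpose_mult_self_nonneg[of "H + transpose H"]
    by (simp add: transpose_add add.commute)
  ultimately show ?thesis
    unfolding loss_curvature_def using assms by simp
qed

lemma loss_curvature_eq_0_iff:
  assumes "0 < q"
  shows "loss_curvature P q H = 0 \<longleftrightarrow> transpose H = - H \<and> H ** P = 0"
proof
  assume "loss_curvature P q H = 0"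
  moreover have "0 \<le> trace (transpose H ** H ** P)"
    by (rule trace_transpose_mult_P_nonneg)
  moreover have "0 \<le> q / 4 * trace ((H + transpose H) ** (H + transpose H))"
    using trace_transpose_mult_self_nonneg[of "H + transpose H"] assms
    by (simp add: transpose_add add.commute)
  ultimately have P_part: "trace (transpose H ** H ** P) = 0"
    and "q / 4 * trace ((H + transpose H) ** (H + transpose H)) = 0"
    unfolding loss_curvature_def by linarith+
  then have "trace (transpose (H + transpose H) ** (H + transpose H)) = 0"
    using assms by (simp add: transpose_add add.commute)
  then have skew: "transpose H = - H"
    unfolding trace_transpose_mult_self_eq_0_iff by (simp add: add_eq_0_iff)
  have "gam i * ((H *v u i) \<bullet> (H *v u i)) = 0" if "i < CARD('n)" for i
    using P_part that unfolding trace_transpose_mult_P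
    by (subst (asm) sum_nonneg_eq_0_iff) (auto intro!: mult_nonneg_nonneg gam_nonneg)
  then have "gam i *\<^sub>R outer (H *v u i) (u i) = 0" if "i < CARD('n)" for i
    using that by (auto simp: outer_def vec_eq_iff)
  then have "H ** P = 0"
    unfolding matrix_mult_P by (auto intro: sum.neutral)
  with skew show "transpose H = - H \<and> H ** P = 0" ..
next
  assume "transpose H = - H \<and> H ** P = 0"
  then show "loss_curvature P q H = 0"
    by (simp add: loss_curvature_def matrix_mul_assoc[symmetric] trace_def)
qed

lemma skew_annihilator_eq_0:
  assumes "CARD('n) \<le> rank P + 1" and skew: "transpose K = - K" and "K ** P = 0"
  shows "K = 0"
proof (rule matrix_eq_0_by_frame)
  have K_frame: "K *v u j = 0" if "j < rank P" for j
  proof -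
    have j: "j < CARD('n)"
      using that rank_bound[of P] by simp
    have "gam j *\<^sub>R (K *v u j) = (K ** P) *v u j"
      by (simp add: matrix_vector_mul_assoc[symmetric] P_frame[OF j] matrix_vector_mult_scaleR)
    then show ?thesis
      using assms(3) gam_pos_iff[OF j] that by simp
  qed
  have skew_coord: "u a \<bullet> (K *v u b) = - ((K *v u a) \<bullet> u b)" for a b
    using dot_lmul_matrix[of "u a" K "u b"] skew
    by (metis transpose_matrix_vector uminus_matrix_vector_mult inner_minus_left)
  fix a b assume "a < CARD('n)" and "b < CARD('n)"
  then have "b < rank P \<or> a < rank P \<or> a = b"
    using assms(1) by linarith
  then show "u a \<bullet> (K *v u b) = 0"
  proof (elim disjE)
    assume "b < rank P"
    then show ?thesis using K_frame by simp
  next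
    assume "a < rank P"
    then show ?thesis using K_frame skew_coord[of a b] by simp
  next
    assume "a = b"
    then show ?thesis using skew_coord[of a a] by (simp add: inner_commute)
  qed
qed

lemma skew_annihilator_exists:
  assumes "rank P + 2 \<le> CARD('n)"
  shows "\<exists>K. transpose K = - K \<and> K ** P = 0 \<and> K \<noteq> 0"
proof -
  define i j where "i = rank P" and "j = rank P + 1"
  have ij: "i < CARD('n)" "j < CARD('n)" "i \<noteq> j" "\<not> i < rank P" "\<not> j < rank P"
    using assms by (auto simp: i_def j_def)
  define K where "K = outer (u i) (u j) - outer (u j) (u i)"
  have "transpose K = - K"
    unfolding K_def by (simp add: transpose_diff transpose_outer)
  moreover have "K ** P = 0"
    unfolding K_def using ij
    by (simp add: matrix_diff_rdistrib outer_matrix_mult transpose_P P_frame gam_eq_0 outer_zero_right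
        del: transpose_matrix_vector)
  moreover have "K *v u j = u i"
    unfolding K_def using ij inner_frame
    by (simp add: matrix_vector_mult_diff_rdistrib outer_matrix_vector_mult)
  then have "K \<noteq> 0"
    using ij inner_frame[of i i] by auto
  ultimately show ?thesis by blast
qed

lemma skew_annihilator_trivial_iff:
  "(\<forall>K. transpose K = - K \<and> K ** P = 0 \<longrightarrow> K = 0) \<longleftrightarrow> CARD('n) \<le> rank P + 1"
proof (cases "CARD('n) \<le> rank P + 1")
  case False
  then have "rank P + 2 \<le> CARD('n)" by linarith
  then show ?thesis
    using False skew_annihilator_exists by blast
qed (use skew_annihilator_eq_0 in blast)

definition critical_coeff :: "real^'n^'n \<Rightarrow> real \<Rightarrow> real \<Rightarrow> nat \<Rightarrow> nat \<Rightarrow> real" where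
  "critical_coeff E q r i j =
     gam i * (r / q) * (u i \<bullet> (E *v u j)) / (2 / q * gam i * gam j + gam i + gam j)"

definition critical_shift :: "real^'n^'n \<Rightarrow> real^'n^'n \<Rightarrow> real \<Rightarrow> real \<Rightarrow> real^'n^'n" where
  "critical_shift Q E q r =
     - (r / q) *\<^sub>R ((mat 1 - Q) ** E ** (mat 1 - Q))
     - 2 *\<^sub>R (\<Sum>i<rank P. \<Sum>j<CARD('n). critical_coeff E q r i j *\<^sub>R outer (u i) (u j))"

lemma frame_coord_critical_shift:
  assumes Q: "is_orth_projector Q (range (\<lambda>x. P *v x))" and "a < CARD('n)" and "b < CARD('n)"
  shows "u a \<bullet> (critical_shift Q E q r *v u b) =
           (if a < rank P then - 2 * critical_coeff E q r a b
            else if b < rank P then 0 else - (r / q) * (u a \<bullet> (E *v u b)))"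
proof -
  have "((mat 1 - Q) ** E ** (mat 1 - Q)) *v u b = (mat 1 - Q) *v (E *v ((mat 1 - Q) *v u b))"
    by (simp add: matrix_vector_mul_assoc matrix_mul_assoc)
  then have "u a \<bullet> (((mat 1 - Q) ** E ** (mat 1 - Q)) *v u b)
      = (if a < rank P \<or> b < rank P then 0 else u a \<bullet> (E *v u b))"
    using frame_coord_complement_projector[OF Q assms(2)] complement_projector_frame[OF Q assms(3)]
    by simp
  then show ?thesis
    unfolding critical_shift_def
    using frame_coord_sum_outer[OF assms(2,3) rank_bound[of P, unfolded min.idem],
        of "critical_coeff E q r"]
    by (simp add: matrix_vector_mult_diff_rdistrib uminus_matrix_vector_mult
        scaleR_matrix_vector_assoc[symmetric] inner_diff_right)
qed

lemma critical_shift_stationary: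
  fixes r :: real
  assumes Q: "is_orth_projector Q (range (\<lambda>x. P *v x))" and sym: "transpose E = E" and "0 < q"
  defines "X \<equiv> critical_shift Q E q r"
  shows "X ** P + (q / 2) *\<^sub>R (X + transpose X) + r *\<^sub>R E = 0"
proof (rule matrix_eq_0_by_frame)
  have X_coord: "u i \<bullet> (X *v u j) =
      (if i < rank P then - 2 * critical_coeff E q r i j
       else if j < rank P then 0 else - (r / q) * (u i \<bullet> (E *v u j)))"
    if "i < CARD('n)" and "j < CARD('n)" for i j
    unfolding X_def using frame_coord_critical_shift[OF Q that] .
  fix a b assume a: "a < CARD('n)" and b: "b < CARD('n)"
  define e where "e = u a \<bullet> (E *v u b)"
  have e_sym: "u b \<bullet> (E *v u a) = e"
    unfolding e_def by (metis dot_lmul_matrix inner_commute sym transpose_matrix_vector)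
  have X_sym: "u a \<bullet> (transpose X *v u b) = u b \<bullet> (X *v u a)"
    by (metis dot_lmul_matrix inner_commute transpose_matrix_vector)
  have "u a \<bullet> ((X ** P + (q / 2) *\<^sub>R (X + transpose X) + r *\<^sub>R E) *v u b)
      = gam b * (u a \<bullet> (X *v u b)) + q / 2 * (u a \<bullet> (X *v u b) + u b \<bullet> (X *v u a)) + r * e"
    unfolding e_def X_sym[symmetric]
    by (simp add: matrix_vector_mult_add_rdistrib scaleR_matrix_vector_assoc[symmetric] inner_add_right
        P_frame[OF b] matrix_vector_mul_assoc[symmetric] matrix_vector_mult_scaleR
        del: transpose_matrix_vector)
  also have "\<dots> = 0"
  proof (cases "a < rank P"; cases "b < rank P")
    assume "a < rank P" and "b < rank P"
    then show ?thesis
      unfolding X_coord[OF a b] X_coord[OF b a] critical_coeff_def e_sym e_def[symmetric]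
      using critical_coeff_balance[OF \<open>0 < q\<close>, of "gam a" "gam b" r e]
        gam_pos_iff[OF a] gam_pos_iff[OF b] by simp
  qed (use \<open>0 < q\<close> gam_pos_iff[OF a] gam_pos_iff[OF b]
      in \<open>auto simp: X_coord[OF a b] X_coord[OF b a] critical_coeff_def e_sym e_def[symmetric]
          gam_eq_0[OF a] gam_eq_0[OF b] field_simps\<close>)
  finally show "u a \<bullet> ((X ** P + (q / 2) *\<^sub>R (X + transpose X) + r *\<^sub>R E) *v u b) = 0" .
qed

lemma sinkhorn_loss_minimizers:
  fixes D r :: real
  assumes Om: "Om + transpose Om = (2 * Oms) *\<^sub>R mat 1" and "transpose Dh = Dh"
    and Q: "is_orth_projector Q (range (\<lambda>x. P *v x))" and "0 < q"
  defines "X \<equiv> critical_shift Q (Dh - D *\<^sub>R mat 1) q r"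
  shows "{Oh. \<forall>Y. sinkhorn_loss Om Oms Dh D P q r Oh \<le> sinkhorn_loss Om Oms Dh D P q r Y}
           = {Om + X + K | K. transpose K = - K \<and> K ** P = 0}" (is "?minimizers = _")
    and "(\<exists>!Oh. \<forall>Y. sinkhorn_loss Om Oms Dh D P q r Oh \<le> sinkhorn_loss Om Oms Dh D P q r Y)
           \<longleftrightarrow> CARD('n) \<le> rank P + 1"
proof -
  let ?E = "Dh - D *\<^sub>R mat 1"
  have E_sym: "transpose ?E = ?E"
    using \<open>transpose Dh = Dh\<close> by (simp add: transpose_diff transpose_scalar)
  have loss_eq: "sinkhorn_loss Om Oms Dh D P q r Y
      = quadratic_loss P ?E q r X + loss_curvature P q (Y - (Om + X))" for Y
    using quadratic_loss_add[OF transpose_P E_sym, of q r X "Y - (Om + X)"]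
      critical_shift_stationary[OF Q E_sym \<open>0 < q\<close>, of r]
    unfolding sinkhorn_loss_eq_quadratic_loss[OF Om] X_def by (simp add: trace_def algebra_simps)
  have "loss_curvature P q 0 = 0"
    using loss_curvature_eq_0_iff[OF \<open>0 < q\<close>] by (simp add: transpose_zero)
  note minimizers = minimizers_of_translated_form[where g = "loss_curvature P q",
      OF loss_eq loss_curvature_nonneg[OF less_imp_le[OF \<open>0 < q\<close>]] this]
  from minimizers \<open>0 < q\<close> show "?minimizers = {Om + X + K | K. transpose K = - K \<and> K ** P = 0}"
    and "(\<exists>!Oh. \<forall>Y. sinkhorn_loss Om Oms Dh D P q r Oh \<le> sinkhorn_loss Om Oms Dh D P q r Y)
           \<longleftrightarrow> CARD('n) \<le> rank P + 1"
    by (simp_all add: loss_curvature_eq_0_iff skew_annihilator_trivial_iff)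
qed

end

lemma ou_variance_pos:
  fixes Oms D Sig0 t :: real
  assumes "Oms < 0" and "0 < D" and "0 < Sig0" and "0 \<le> t"
  shows "0 < Sig0 * exp (2 * Oms * t) + D * (exp (2 * Oms * t) - 1) / Oms"
proof -
  have "exp (2 * Oms * t) \<le> 1"
    using assms(1,4) by (simp add: mult_nonpos_nonneg)
  then have "0 \<le> D * (exp (2 * Oms * t) - 1) / Oms"
    using assms(1,2) by (intro divide_nonpos_neg mult_nonneg_nonpos) auto
  moreover have "0 < Sig0 * exp (2 * Oms * t)"
    using assms(3) by simp
  ultimately show ?thesis by linarith
qed

lemma integral_sinkhorn_weight_pos:
  fixes s :: "real \<Rightarrow> real" and a b eps :: real
  assumes "continuous_on {a..b} s" and "a < b" and "\<And>t. t \<in> {a..b} \<Longrightarrow> 0 < s t"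
  shows "0 < integral {a..b} (\<lambda>t. (s t)\<^sup>2 / sqrt (eps\<^sup>2 / 16 + (s t)\<^sup>2))"
proof -
  have "0 < sqrt (eps\<^sup>2 / 16 + (s t)\<^sup>2)" if "t \<in> {a..b}" for t
    using assms(3)[OF that] by (simp add: add_nonneg_pos)
  then have "integral {a..b} (\<lambda>t. 0)
      < integral {a..b} (\<lambda>t. (s t)\<^sup>2 / sqrt (eps\<^sup>2 / 16 + (s t)\<^sup>2))"
    using assms by (intro integral_less_real continuous_intros) (auto simp: less_imp_neq[symmetric])
  then show ?thesis by simp
qed

theorem mainTheorem3:
  fixes Oms D Sig0 T eps :: real
    and Oma Om Dh P Q :: "real^'n^'n"
    and m0 :: "real^'n"
    and m :: "real \<Rightarrow> real^'n"
    and sig2 :: "real \<Rightarrow> real"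
    and gam :: "nat \<Rightarrow> real"
    and u :: "nat \<Rightarrow> real^'n"
    and mu :: "nat \<Rightarrow> nat \<Rightarrow> real"
    and q r :: real
    and l :: nat
  assumes "Oms < 0"
    and "transpose Oma = - Oma"
    and "Om = Oms *\<^sub>R mat 1 + Oma"
    and "D > 0" and "Sig0 > 0" and "T > 0" and "eps \<ge> 0"
    and "transpose Dh = Dh"
    and "\<And>t. m t = mat_exp (t *\<^sub>R Om) *v m0"
    and "\<And>t. sig2 t = Sig0 * exp (2 * Oms * t) + D * (exp (2 * Oms * t) - 1) / Oms"
    and "P = integral {0..T} (\<lambda>t. outer (m t) (m t))"
    and "\<And>i j. i < CARD('n) \<Longrightarrow> j < CARD('n) \<Longrightarrow> u i \<bullet> u j = (if i = j then 1 else 0)"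
    and "\<And>i j. i \<le> j \<Longrightarrow> j < CARD('n) \<Longrightarrow> gam j \<le> gam i"
    and "\<And>i. i < CARD('n) \<Longrightarrow> gam i \<ge> 0"
    and "P = (\<Sum>i<CARD('n). gam i *\<^sub>R outer (u i) (u i))"
    and "l = rank P"
    and "is_orth_projector Q (range (\<lambda>x. P *v x))"
    and "\<And>i j. mu i j = u i \<bullet> ((Dh - D *\<^sub>R mat 1) *v u j)"
    and "q = integral {0..T} (\<lambda>t. (sig2 t)\<^sup>2 / sqrt (eps\<^sup>2 / 16 + (sig2 t)\<^sup>2))"
    and "r = integral {0..T} (\<lambda>t. sig2 t / sqrt (eps\<^sup>2 / 16 + (sig2 t)\<^sup>2))"
  shows "{Oh. \<forall>X. sinkhorn_loss Om Oms Dh D P q r Oh \<le> sinkhorn_loss Om Oms Dh D P q r X}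
           = {Om - (r / q) *\<^sub>R ((mat 1 - Q) ** (Dh - D *\<^sub>R mat 1) ** (mat 1 - Q))
                - 2 *\<^sub>R (\<Sum>i<l. \<Sum>j<CARD('n).
                     (gam i * (r / q) * mu i j / (2 / q * gam i * gam j + gam i + gam j))
                       *\<^sub>R outer (u i) (u j))
                + K | K. transpose K = - K \<and> K ** P = 0}
       \<and> ((\<exists>!Oh. \<forall>X. sinkhorn_loss Om Oms Dh D P q r Oh \<le> sinkhorn_loss Om Oms Dh D P q r X)
            \<longleftrightarrow> rank P + 1 \<ge> CARD('n))"
proof -
  interpret spectral_decomposition u gam P
    by unfold_locales (use assms(12-15) in auto)
  have "Om + transpose Om = Oms *\<^sub>R mat 1 + Oms *\<^sub>R mat 1"
    using assms(2,3) by (simp add: transpose_add transpose_scalar)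
  then have Om_sym: "Om + transpose Om = (2 * Oms) *\<^sub>R mat 1"
    by (metis mult_2 scaleR_left_distrib)
  have "continuous_on {0..T} sig2"
    unfolding assms(10)[abs_def] using assms(1) by (intro continuous_intros) auto
  then have "0 < q"
    unfolding assms(19) using assms(1,4,5,6,10) ou_variance_pos
    by (intro integral_sinkhorn_weight_pos) auto
  have shift: "Om - (r / q) *\<^sub>R ((mat 1 - Q) ** (Dh - D *\<^sub>R mat 1) ** (mat 1 - Q))
          - 2 *\<^sub>R (\<Sum>i<l. \<Sum>j<CARD('n).
               (gam i * (r / q) * mu i j / (2 / q * gam i * gam j + gam i + gam j))
                 *\<^sub>R outer (u i) (u j))
          + K = Om + critical_shift Q (Dh - D *\<^sub>R mat 1) q r + K" for K
    unfolding critical_shift_def critical_coeff_def assms(16,18) by (simp add: algebra_simps)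
  show ?thesis
    unfolding shift using sinkhorn_loss_minimizers[OF Om_sym assms(8,17) \<open>0 < q\<close>, of D r] by simp
qed

end
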